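(* Let $\mathcal{X}$ be a nonempty open convex subset of $\mathbb{R}^n$ and let $\textbf{F}:\mathcal{X}\to I(\mathbb{R})$ be $gH$-differentiable on $\mathcal{X}$. If $\textbf{F}$ is convex on $\mathcal{X}$, then \[(y-x)^T\odot\nabla\textbf{F}(x)\preceq\textbf{F}(y)\ominus_{gH}\textbf{F}(x)\quad\text{for all }x,y\in\mathcal{X}.\]
   Context: $I(\mathbb{R})$: closed bounded intervals $\textbf{A}=[\underline{a},\overline{a}]$ with Moore arithmetic ($\oplus$ endpointwise; $\lambda\odot\textbf{A}=[\lambda\underline{a},\lambda\overline{a}]$ if $\lambda\ge0$, $[\lambda\overline{a},\lambda\underline{a}]$ if $\lambda<0$); $gH$-difference $\textbf{A}\ominus_{gH}\textbf{B}=[\min\{\underline{a}-\underline{b},\overline{a}-\overline{b}\},\max\{\underline{a}-\underline{b},\overline{a}-\overline{b}\}]$; limits in the norm $\max\{|\underline{a}|,|\overline{a}|\}$. $\textbf{A}\preceq\textbf{B}$ iff $\underline{a}\le\underline{b}$ and $\overline{a}\le\overline{b}$. An IVF is $\textbf{F}(x)=[\underline{f}(x),\overline{f}(x)]$. $D_i\textbf{F}(x)=\lim_{h\to0}\frac1h\odot(\textbf{F}(x+he_i)\ominus_{gH}\textbf{F}(x))$, $\nabla\textbf{F}(x)=(D_1\textbf{F}(x),\dots,D_n\textbf{F}(x))^T$, $d^T\odot\nabla\textbf{F}(x)=\bigoplus_i d_i\odot D_i\textbf{F}(x)$. Linear IVF: $\textbf{L}(x)=\bigoplus_i x_i\odot\textbf{L}(e_i)$.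 $\textbf{F}$ is $gH$-differentiable at $\bar{x}$ if there exist a linear IVF $\textbf{L}_{\bar{x}}$, an IVF $\textbf{E}(\textbf{F}(\bar{x});d)$ and $\delta>0$ with $(\textbf{F}(\bar{x}+d)\ominus_{gH}\textbf{F}(\bar{x}))\ominus_{gH}\textbf{L}_{\bar{x}}(d)=\lVert d\rVert\odot\textbf{E}(\textbf{F}(\bar{x});d)$ for $\lVert d\rVert<\delta$ and $\textbf{E}\to\textbf{0}$ as $\lVert d\rVert\to0$; on $\mathcal{X}$ means at every point. $\textbf{F}$ is convex if $\textbf{F}(\lambda x_1+(1-\lambda)x_2)\preceq\lambda\odot\textbf{F}(x_1)\oplus(1-\lambda)\odot\textbf{F}(x_2)$ for all $x_1,x_2\in\mathcal{X}$, $\lambda\in[0,1]$. *)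

theory Defs
  imports "HOL-Analysis.Analysis"
begin

text \<open>Closed bounded intervals are represented as pairs (lower, upper) of reals
  with lower \<le> upper. The topology on real \<times> real is the product topology,
  which coincides with the one induced by the norm max(|lo|,|up|).
  Moore addition is the componentwise addition of pairs.\<close>

type_synonym ival = "real \<times> real"

definition is_ival :: "ival \<Rightarrow> bool" where
  "is_ival A \<longleftrightarrow> fst A \<le> snd A"

definition ival_scale :: "real \<Rightarrow> ival \<Rightarrow> ival" where
  "ival_scale l A = (if l \<ge> 0 then (l * fst A, l * snd A) else (l * snd A, l * fst A))"

definition gH_diff :: "ival \<Rightarrow> ival \<Rightarrow> ival" where
  "gH_diff A B = (min (fst A - fst B) (snd A - snd B), max (fst A - fst B) (snd A - snd B))"

definition ival_le :: "ival \<Rightarrow> ival \<Rightarrow> bool" where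
  "ival_le A B \<longleftrightarrow> fst A \<le> fst B \<and> snd A \<le> snd B"

definition gH_partial :: "(real^'n \<Rightarrow> ival) \<Rightarrow> real^'n \<Rightarrow> 'n \<Rightarrow> ival" where
  "gH_partial F x i =
     Lim (at 0) (\<lambda>h. ival_scale (1 / h) (gH_diff (F (x + h *\<^sub>R axis i 1)) (F x)))"

text \<open>d^T \<odot> grad F(x) = Moore sum over i of d_i \<odot> D_i F(x).\<close>
definition gH_grad_dir :: "(real^'n \<Rightarrow> ival) \<Rightarrow> real^'n \<Rightarrow> real^'n \<Rightarrow> ival" where
  "gH_grad_dir F x d = (\<Sum>i\<in>UNIV. ival_scale (d $ i) (gH_partial F x i))"

definition lin_ivf :: "('n::finite \<Rightarrow> ival) \<Rightarrow> real^'n \<Rightarrow> ival" where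
  "lin_ivf c d = (\<Sum>i\<in>UNIV. ival_scale (d $ i) (c i))"

definition gH_differentiable_at :: "(real^'n::finite \<Rightarrow> ival) \<Rightarrow> real^'n \<Rightarrow> bool" where
  "gH_differentiable_at F x \<longleftrightarrow>
     (\<exists>c E \<delta>. (\<forall>i. is_ival (c i)) \<and> (\<forall>d. is_ival (E d)) \<and> \<delta> > 0 \<and>
        (\<forall>d. norm d < \<delta> \<longrightarrow>
            gH_diff (gH_diff (F (x + d)) (F x)) (lin_ivf c d) = ival_scale (norm d) (E d)) \<and>
        (E \<longlongrightarrow> (0, 0)) (at 0))"

definition gH_differentiable_on :: "(real^'n::finite \<Rightarrow> ival) \<Rightarrow> (real^'n) set \<Rightarrow> bool" where
  "gH_differentiable_on F X \<longleftrightarrow> (\<forall>x\<in>X. gH_differentiable_at F x)"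

definition ivf_convex_on :: "(real^'n::finite) set \<Rightarrow> (real^'n \<Rightarrow> ival) \<Rightarrow> bool" where
  "ivf_convex_on X F \<longleftrightarrow>
     (\<forall>x1\<in>X. \<forall>x2\<in>X. \<forall>l::real. 0 \<le> l \<and> l \<le> 1 \<longrightarrow>
        ival_le (F (l *\<^sub>R x1 + (1 - l) *\<^sub>R x2))
                (ival_scale l (F x1) + ival_scale (1 - l) (F x2)))"

end

theory Submission
  imports Defs
begin

text \<open>The gH-difference only permutes the two endpoint differences, so it has the same norm
  as the plain difference of pairs. Hence the expansion defining gH-differentiability at \<open>x\<close>
  puts the difference quotient \<open>(1/h) \<odot> (F(x + h v) \<ominus>\<^sub>g\<^sub>H F(x))\<close> at distance
  \<open>\<parallel>v\<parallel> \<parallel>E(h v)\<parallel>\<close> from \<open>L\<^sub>x(v)\<close>, so the quotient tends to \<open>L\<^sub>x(v)\<close> as \<open>h \<rightarrow> 0\<close>.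
  Taking \<open>v = e\<^sub>i\<close> identifies \<open>L\<^sub>x(e\<^sub>i)\<close> with \<open>D\<^sub>iF(x)\<close>, whence \<open>L\<^sub>x(v) = v\<^sup>T \<odot> \<nabla>F(x)\<close>.
  For \<open>v = y - x\<close> and \<open>0 < h \<le> 1\<close>, convexity bounds the quotient by \<open>F(y) \<ominus>\<^sub>g\<^sub>H F(x)\<close>,
  and \<open>\<preceq>\<close> survives the limit \<open>h \<rightarrow> 0\<^sup>+\<close>.\<close>

definition gH_diff_quotient :: "(real^'n \<Rightarrow> ival) \<Rightarrow> real^'n \<Rightarrow> real^'n \<Rightarrow> real \<Rightarrow> ival" where
  "gH_diff_quotient F x v h = ival_scale (1 / h) (gH_diff (F (x + h *\<^sub>R v)) (F x))"

lemma ival_scale_zero_left [simp]: "ival_scale 0 A = 0"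
  by (simp add: ival_scale_def zero_prod_def)

lemma ival_scale_zero_right [simp]: "ival_scale l 0 = 0"
  by (simp add: ival_scale_def zero_prod_def)

lemma ival_scale_one [simp]: "ival_scale 1 A = A"
  by (simp add: ival_scale_def)

lemma ival_scale_add: "ival_scale l (A + B) = ival_scale l A + ival_scale l B"
  by (simp add: ival_scale_def distrib_left)

lemma ival_scale_diff: "ival_scale l (A - B) = ival_scale l A - ival_scale l B"
  by (simp add: ival_scale_def right_diff_distrib)

lemma ival_scale_sum: "ival_scale l (\<Sum>i\<in>S. f i) = (\<Sum>i\<in>S. ival_scale l (f i))"
  by (induction S rule: infinite_finite_induct) (simp_all add: ival_scale_add)

lemma ival_scale_mult: "ival_scale (a * b) A = ival_scale a (ival_scale b A)"
  by (auto simp: ival_scale_def zero_le_mult_iff mult_le_0_iff)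

lemma norm_ival_scale: "norm (ival_scale l A) = \<bar>l\<bar> * norm A"
  by (simp add: ival_scale_def norm_prod_def power_mult_distrib real_sqrt_mult
      add.commute flip: distrib_left)

lemma norm_gH_diff: "norm (gH_diff A B) = norm (A - B)"
  by (simp add: gH_diff_def norm_prod_def min_def max_def add.commute)

lemma ival_le_scale:
  assumes "ival_le A B" "0 \<le> l"
  shows "ival_le (ival_scale l A) (ival_scale l B)"
  using assms by (simp add: ival_le_def ival_scale_def mult_left_mono)

lemma ival_le_gH_diff_scale:
  assumes "ival_le A (ival_scale t B + ival_scale (1 - t) C)" "0 \<le> t" "t \<le> 1"
  shows "ival_le (gH_diff A C) (ival_scale t (gH_diff B C))"
proof -
  have "fst A - fst C \<le> t * (fst B - fst C)" "snd A - snd C \<le> t * (snd B - snd C)"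
    using assms by (simp_all add: ival_le_def ival_scale_def algebra_simps)
  then show ?thesis
    using assms(2) by (auto simp: ival_le_def ival_scale_def gH_diff_def
        min_mult_distrib_left max_mult_distrib_left)
qed

lemma ival_le_tendsto:
  assumes "(f \<longlongrightarrow> A) F" "eventually (\<lambda>h. ival_le (f h) B) F" "F \<noteq> bot"
  shows "ival_le A B"
proof -
  have "fst A \<le> fst B"
    by (rule tendsto_upperbound[OF tendsto_fst[OF assms(1)] _ assms(3)])
      (use assms(2) in \<open>simp add: ival_le_def eventually_mono\<close>)
  moreover have "snd A \<le> snd B"
    by (rule tendsto_upperbound[OF tendsto_snd[OF assms(1)] _ assms(3)])
      (use assms(2) in \<open>simp add: ival_le_def eventually_mono\<close>)
  ultimately show ?thesis by (simp add: ival_le_def)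
qed

lemma lin_ivf_scaleR: "lin_ivf c (h *\<^sub>R v) = ival_scale h (lin_ivf c v)"
  by (simp add: lin_ivf_def ival_scale_sum ival_scale_mult)

lemma lin_ivf_axis: "lin_ivf c (axis i 1) = c i"
proof -
  have "lin_ivf c (axis i 1) = (\<Sum>j\<in>UNIV. if j = i then c i else 0)"
    unfolding lin_ivf_def by (rule sum.cong) (auto simp: axis_def)
  then show ?thesis by simp
qed

lemma norm_scaled_sub_lin_ivf:
  assumes "gH_diff D (lin_ivf c (h *\<^sub>R v)) = ival_scale (norm (h *\<^sub>R v)) R" "h \<noteq> 0"
  shows "norm (ival_scale (1 / h) D - lin_ivf c v) = norm v * norm R"
proof -
  have "ival_scale (1 / h) D - lin_ivf c v = ival_scale (1 / h) (D - lin_ivf c (h *\<^sub>R v))"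
    using assms(2) by (simp add: ival_scale_diff lin_ivf_scaleR flip: ival_scale_mult)
  then have "norm (ival_scale (1 / h) D - lin_ivf c v)
      = \<bar>1 / h\<bar> * norm (gH_diff D (lin_ivf c (h *\<^sub>R v)))"
    by (simp add: norm_ival_scale norm_gH_diff)
  also have "\<dots> = norm v * norm R"
    using assms by (simp add: norm_ival_scale)
  finally show ?thesis .
qed

lemma tendsto_along_ray:
  fixes E :: "'a::real_normed_vector \<Rightarrow> 'b::topological_space"
  assumes "(E \<longlongrightarrow> l) (at 0)" "v \<noteq> 0"
  shows "((\<lambda>h::real. E (h *\<^sub>R v)) \<longlongrightarrow> l) (at 0)"
proof -
  have "filterlim (\<lambda>h::real. h *\<^sub>R v) (at 0) (at 0)"
    using assms(2) by (intro filterlim_atI) (auto intro!: tendsto_eq_intros simp: eventually_at_filter)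
  then show ?thesis
    by (rule filterlim_compose[OF assms(1)])
qed

lemma gH_diff_quotient_tendsto_lin_ivf:
  fixes F :: "real^'n::finite \<Rightarrow> ival"
  assumes expansion: "\<forall>d. norm d < \<delta> \<longrightarrow>
      gH_diff (gH_diff (F (x + d)) (F x)) (lin_ivf c d) = ival_scale (norm d) (E d)"
    and "0 < \<delta>" and "(E \<longlongrightarrow> 0) (at 0)"
  shows "(gH_diff_quotient F x v \<longlongrightarrow> lin_ivf c v) (at 0)"
proof -
  have remainder_tendsto: "((\<lambda>h. norm v * norm (E (h *\<^sub>R v))) \<longlongrightarrow> 0) (at 0)"
    using tendsto_along_ray[OF assms(3)]
    by (cases "v = 0") (auto intro!: tendsto_eq_intros simp: tendsto_norm_zero_iff)
  have "eventually (\<lambda>h::real. h \<noteq> 0 \<and> norm (h *\<^sub>R v) < \<delta>) (at 0)"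
    using \<open>0 < \<delta>\<close> by (intro eventually_conj eventually_at_filter[THEN iffD2]
        tendsto_eq_intros order_tendstoD) auto
  then have "eventually (\<lambda>h. norm (gH_diff_quotient F x v h - lin_ivf c v)
      = norm v * norm (E (h *\<^sub>R v))) (at 0)"
    by (rule eventually_mono)
      (use expansion in \<open>simp add: gH_diff_quotient_def norm_scaled_sub_lin_ivf\<close>)
  with remainder_tendsto
  have "((\<lambda>h. norm (gH_diff_quotient F x v h - lin_ivf c v)) \<longlongrightarrow> 0) (at 0)"
    by (simp add: tendsto_cong)
  then show ?thesis
    by (simp add: tendsto_norm_zero_iff LIM_zero_iff)
qed

lemma gH_diff_quotient_tendsto_grad_dir:
  assumes "gH_differentiable_at F x"
  shows "(gH_diff_quotient F x v \<longlongrightarrow> gH_grad_dir F x v) (at 0)"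
proof -
  from assms obtain c E \<delta> where expansion: "\<forall>d. norm d < \<delta> \<longrightarrow>
      gH_diff (gH_diff (F (x + d)) (F x)) (lin_ivf c d) = ival_scale (norm d) (E d)"
    and "0 < \<delta>" and "(E \<longlongrightarrow> 0) (at 0)"
    unfolding gH_differentiable_at_def zero_prod_def by blast
  note quotient_tendsto = gH_diff_quotient_tendsto_lin_ivf[OF this]
  have "gH_partial F x i = c i" for i
    using tendsto_Lim[OF trivial_limit_at quotient_tendsto[of "axis i 1"]]
    by (simp add: gH_partial_def gH_diff_quotient_def[abs_def] lin_ivf_axis)
  then have "gH_grad_dir F x v = lin_ivf c v"
    by (simp add: gH_grad_dir_def lin_ivf_def)
  then show ?thesis
    using quotient_tendsto by simp
qed

lemma ivf_convex_on_gH_diff_quotient_le: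
  assumes "ivf_convex_on X F" "x \<in> X" "y \<in> X" "0 < h" "h \<le> 1"
  shows "ival_le (gH_diff_quotient F x (y - x) h) (gH_diff (F y) (F x))"
proof -
  have "x + h *\<^sub>R (y - x) = h *\<^sub>R y + (1 - h) *\<^sub>R x"
    by (simp add: algebra_simps)
  then have "ival_le (F (x + h *\<^sub>R (y - x))) (ival_scale h (F y) + ival_scale (1 - h) (F x))"
    using assms unfolding ivf_convex_on_def by simp
  then have "ival_le (gH_diff (F (x + h *\<^sub>R (y - x))) (F x)) (ival_scale h (gH_diff (F y) (F x)))"
    using assms by (intro ival_le_gH_diff_scale) auto
  then have "ival_le (gH_diff_quotient F x (y - x) h)
      (ival_scale (1 / h) (ival_scale h (gH_diff (F y) (F x))))"
    unfolding gH_diff_quotient_def using assms by (intro ival_le_scale) auto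
  then show ?thesis
    using assms by (simp flip: ival_scale_mult)
qed

theorem theorem3p3:
  fixes X :: "(real^'n::finite) set" and F :: "real^'n \<Rightarrow> real \<times> real"
  assumes "X \<noteq> {}" and "open X" and "convex X"
    and "\<forall>x\<in>X. is_ival (F x)"
    and "gH_differentiable_on F X"
    and "ivf_convex_on X F"
  shows "\<forall>x\<in>X. \<forall>y\<in>X. ival_le (gH_grad_dir F x (y - x)) (gH_diff (F y) (F x))"
proof (intro ballI)
  fix x y assume "x \<in> X" "y \<in> X"
  have "(gH_diff_quotient F x (y - x) \<longlongrightarrow> gH_grad_dir F x (y - x)) (at_right 0)"
    using assms(5) \<open>x \<in> X\<close> unfolding gH_differentiable_on_def
    by (blast intro: gH_diff_quotient_tendsto_grad_dir tendsto_mono[OF at_le])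
  moreover have "eventually (\<lambda>h. ival_le (gH_diff_quotient F x (y - x) h) (gH_diff (F y) (F x)))
      (at_right 0)"
  proof -
    have "eventually (\<lambda>h. 0 < h \<and> h \<le> (1::real)) (at_right 0)"
      by (auto simp: eventually_at_right_field intro!: exI[of _ 1])
    then show ?thesis
      by (rule eventually_mono)
        (use assms(6) \<open>x \<in> X\<close> \<open>y \<in> X\<close> in \<open>blast intro: ivf_convex_on_gH_diff_quotient_le\<close>)
  qed
  ultimately show "ival_le (gH_grad_dir F x (y - x)) (gH_diff (F y) (F x))"
    by (rule ival_le_tendsto) simp
qed

end
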